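(* Suppose $S$ and $T$ are identically zero on $\Omega$. Then for any $(x_0,y_0,z_0,\lambda_0)\in\Omega$ there exist an open set $W\subset\mathbb{R}^3$, an open interval $I\subset\mathbb{R}$ with $(x_0,y_0,z_0,\lambda_0)\in W\times I\subset\Omega$, and seven smooth functions $\hat a^0,\hat a^1,\hat a^2,\hat b^0,\hat b^1,\hat c^0,\hat c^1:W\to\mathbb{R}$ such that $\hat c^0+\hat c^1\lambda$ does not vanish on $W\times I$, $\hat c^1\hat b^0-\hat b^1\hat c^0$ does not vanish on $W$, and for $(x,y,z,\lambda)\in W\times I$ and $\dot x,\dot z\in\mathbb{R}$, the equation $\dot z=h(x,y,z,\lambda)+g(x,y,z,\lambda)\dot x$ is equivalent to $$\lambda\big(\hat b^1\dot x+\hat a^2\lambda-\hat c^1\dot z\big)+\big(\hat b^0\dot x+\hat a^1\lambda-\hat c^0\dot z\big)+\hat a^0=0,$$ where all of $\hat a^0,\dots,\hat c^1$ are evaluated at $(x,y,z)$.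
   Context: $\Omega\subset\mathbb{R}^4$ is open connected and $g,h:\Omega\to\mathbb{R}$ are real analytic functions of $(x,y,z,\lambda)$ such that $g_4=\partial g/\partial\lambda$ does not vanish on $\Omega$ and $G(x,y,z,\lambda)=(x,y,z,g(x,y,z,\lambda))$ is a diffeomorphism from $\Omega$ onto $G(\Omega)$. Numeric subscripts denote partial derivatives with respect to the corresponding argument. $S=2g_4g_{4,4,4}-3g_{4,4}^2$ and $T=2g_4h_{4,4,4}-3g_{4,4}h_{4,4}$. *)

theory Defs
  imports "HOL-Analysis.Analysis"
begin

type_synonym R3 = "real \<times> real \<times> real"
type_synonym R4 = "real \<times> real \<times> real \<times> real"

fun Ck_on :: "nat \<Rightarrow> 'a::euclidean_space set \<Rightarrow> ('a \<Rightarrow> 'b::real_normed_vector) \<Rightarrow> bool" where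
  "Ck_on 0 S f = continuous_on S f"
| "Ck_on (Suc k) S f =
     (\<exists>f'. (\<forall>x\<in>S. (f has_derivative f' x) (at x)) \<and> (\<forall>v. Ck_on k S (\<lambda>x. f' x v)))"

definition smooth_on :: "'a::euclidean_space set \<Rightarrow> ('a \<Rightarrow> 'b::real_normed_vector) \<Rightarrow> bool" where
  "smooth_on S f \<longleftrightarrow> (\<forall>k. Ck_on k S f)"

definition diffeo_onto_image :: "'a::euclidean_space set \<Rightarrow> ('a \<Rightarrow> 'a) \<Rightarrow> bool" where
  "diffeo_onto_image U f \<longleftrightarrow> open U \<and> open (f ` U) \<and> inj_on f U \<and> smooth_on U f
     \<and> smooth_on (f ` U) (the_inv_into U f)"

text \<open>Real analytic on U \<subseteq> R^4: locally the sum of an (unconditionally, i.e. absolutely)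
convergent power series in four variables.\<close>
definition real_analytic_on4 :: "R4 set \<Rightarrow> (R4 \<Rightarrow> real) \<Rightarrow> bool" where
  "real_analytic_on4 U f \<longleftrightarrow>
    (\<forall>p\<in>U. \<exists>r>0. \<exists>c :: nat \<Rightarrow> nat \<Rightarrow> nat \<Rightarrow> nat \<Rightarrow> real.
       \<forall>q\<in>ball p r.
         ((\<lambda>(i,j,k,l). c i j k l * (fst q - fst p) ^ i * (fst (snd q) - fst (snd p)) ^ j
              * (fst (snd (snd q)) - fst (snd (snd p))) ^ k
              * (snd (snd (snd q)) - snd (snd (snd p))) ^ l)
           has_sum f q) UNIV)"

definition d4 :: "(R4 \<Rightarrow> real) \<Rightarrow> R4 \<Rightarrow> real" where
  "d4 f = (\<lambda>(x,y,z,l). deriv (\<lambda>t. f (x,y,z,t)) l)"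

end

theory Submission
  imports Defs
begin

text \<open>For fixed \<open>(x, y, z)\<close> the condition \<open>S = 0\<close> says that \<open>\<lambda> \<mapsto> g(x, y, z, \<lambda>)\<close> has vanishing
  Schwarzian derivative, so it is a Moebius function of \<open>\<lambda>\<close>: with
  \<open>D(\<lambda>) = 2 g\<^sub>4(\<lambda>\<^sub>0) - g\<^sub>4\<^sub>4(\<lambda>\<^sub>0) (\<lambda> - \<lambda>\<^sub>0)\<close>, the denominator \<open>D\<close> has no zero on the interval
  and \<open>g D\<close> is affine in \<open>\<lambda>\<close>. Given this, \<open>T = 0\<close> says exactly that \<open>(h D)''' = 0\<close>, so \<open>h D\<close> is
  quadratic in \<open>\<lambda>\<close>. Multiplying \<open>z' = h + g x'\<close> by \<open>D\<close> gives the stated relation, whose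
  coefficients are polynomials in the \<open>\<lambda>\<close>-derivatives of \<open>g\<close> and \<open>h\<close> at \<open>\<lambda>\<^sub>0\<close>; these are smooth
  in \<open>(x, y, z)\<close> because \<open>g\<close> and \<open>h\<close> are locally sums of power series.\<close>

section \<open>Smooth functions\<close>

lemma Ck_on_SucD: "Ck_on (Suc k) S f \<Longrightarrow> Ck_on k S f"
proof (induction k arbitrary: f)
  case 0
  then obtain f' where "\<forall>x\<in>S. (f has_derivative f' x) (at x)" by auto
  then show ?case
    by (auto intro!: continuous_at_imp_continuous_on has_derivative_continuous)
next
  case (Suc k)
  then show ?case by auto
qed

lemma Ck_on_const: "Ck_on k S (\<lambda>x. c)"
proof (induction k arbitrary: c)
  case (Suc k)
  show ?case using Suc.IH by (auto intro!: exI[of _ "\<lambda>x v. 0"])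
qed simp

lemma Ck_on_add: "Ck_on k S f \<Longrightarrow> Ck_on k S g \<Longrightarrow> Ck_on k S (\<lambda>x. f x + g x)"
proof (induction k arbitrary: f g)
  case (Suc k)
  then obtain f' g' where "\<forall>x\<in>S. (f has_derivative f' x) (at x)" "\<forall>v. Ck_on k S (\<lambda>x. f' x v)"
    and "\<forall>x\<in>S. (g has_derivative g' x) (at x)" "\<forall>v. Ck_on k S (\<lambda>x. g' x v)"
    by auto
  then show ?case
    using Suc.IH by (auto intro!: exI[of _ "\<lambda>x v. f' x v + g' x v"] has_derivative_add)
qed (auto intro: continuous_on_add)

lemma Ck_on_sum:
  "finite A \<Longrightarrow> (\<And>i. i \<in> A \<Longrightarrow> Ck_on k S (f i)) \<Longrightarrow> Ck_on k S (\<lambda>x. \<Sum>i\<in>A. f i x)"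
  by (induction A rule: finite_induct) (auto intro: Ck_on_add Ck_on_const)

lemma Ck_on_mult:
  fixes f g :: "'a::euclidean_space \<Rightarrow> 'b::real_normed_algebra"
  shows "Ck_on k S f \<Longrightarrow> Ck_on k S g \<Longrightarrow> Ck_on k S (\<lambda>x. f x * g x)"
proof (induction k arbitrary: f g)
  case (Suc k)
  have "Ck_on k S f" "Ck_on k S g" using Suc.prems by (blast intro: Ck_on_SucD)+
  moreover obtain f' g' where "\<forall>x\<in>S. (f has_derivative f' x) (at x)" "\<forall>v. Ck_on k S (\<lambda>x. f' x v)"
    and "\<forall>x\<in>S. (g has_derivative g' x) (at x)" "\<forall>v. Ck_on k S (\<lambda>x. g' x v)"
    using Suc.prems by auto
  ultimately show ?case
    using Suc.IH
    by (auto intro!: exI[of _ "\<lambda>x v. f x * g' x v + f' x v * g x"] has_derivative_mult Ck_on_add)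
qed (auto intro: continuous_on_mult)

lemma Ck_on_cong:
  assumes "open S" "\<And>x. x \<in> S \<Longrightarrow> f x = g x" "Ck_on k S f"
  shows "Ck_on k S g"
  using assms(2,3)
proof (induction k arbitrary: f g)
  case 0
  then show ?case using continuous_on_cong by fastforce
next
  case (Suc k)
  then obtain f' where "\<forall>x\<in>S. (f has_derivative f' x) (at x)" "\<forall>v. Ck_on k S (\<lambda>x. f' x v)"
    by auto
  with Suc.prems(1) \<open>open S\<close> show ?case
    by (auto intro: has_derivative_transform_within_open)
qed

lemma Ck_on_compose_affine:
  assumes L: "\<And>x. (L has_derivative A) (at x)" and LT: "\<And>x. x \<in> T \<Longrightarrow> L x \<in> S"
  shows "Ck_on k S f \<Longrightarrow> Ck_on k T (\<lambda>x. f (L x))"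
proof (induction k arbitrary: f)
  case 0
  have "continuous_on T L"
    using L by (meson continuous_at_imp_continuous_on has_derivative_continuous)
  then show ?case using 0 LT by (auto intro: continuous_on_compose2)
next
  case (Suc k)
  then obtain f' where f': "\<forall>x\<in>S. (f has_derivative f' x) (at x)" "\<forall>v. Ck_on k S (\<lambda>x. f' x v)"
    by auto
  have "((\<lambda>x. f (L x)) has_derivative (\<lambda>v. f' (L x) (A v))) (at x)" if "x \<in> T" for x
    using diff_chain_at[OF L, of f "f' (L x)" x] f'(1) LT[OF that] by (simp add: o_def)
  then show ?case using Suc.IH f'(2) by (auto intro!: exI[of _ "\<lambda>x v. f' (L x) (A v)"])
qed

lemma smooth_on_const: "smooth_on S (\<lambda>x. c)"
  by (simp add: smooth_on_def Ck_on_const)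

lemma smooth_on_add: "smooth_on S f \<Longrightarrow> smooth_on S g \<Longrightarrow> smooth_on S (\<lambda>x. f x + g x)"
  by (simp add: smooth_on_def Ck_on_add)

lemma smooth_on_mult:
  fixes f g :: "'a::euclidean_space \<Rightarrow> 'b::real_normed_algebra"
  shows "smooth_on S f \<Longrightarrow> smooth_on S g \<Longrightarrow> smooth_on S (\<lambda>x. f x * g x)"
  by (simp add: smooth_on_def Ck_on_mult)

lemma smooth_on_uminus:
  fixes f :: "'a::euclidean_space \<Rightarrow> 'b::real_normed_algebra_1"
  assumes "smooth_on S f"
  shows "smooth_on S (\<lambda>x. - f x)"
  using smooth_on_mult[OF smooth_on_const[of S "- 1"] assms] by simp

lemma smooth_on_diff:
  fixes f g :: "'a::euclidean_space \<Rightarrow> 'b::real_normed_algebra_1"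
  assumes "smooth_on S f" "smooth_on S g"
  shows "smooth_on S (\<lambda>x. f x - g x)"
  using smooth_on_add[OF assms(1) smooth_on_uminus[OF assms(2)]] by simp

section \<open>Functions with vanishing Schwarzian derivative\<close>

lemma DERIV_zero_constant_on_interval:
  fixes F :: "real \<Rightarrow> real"
  assumes "is_interval I" "\<And>t. t \<in> I \<Longrightarrow> (F has_real_derivative 0) (at t)" "s \<in> I" "t \<in> I"
  shows "F s = F t"
proof -
  obtain c where "\<forall>x\<in>I. F x = c"
    using has_field_derivative_zero_constant[of I F] assms(1,2)
    by (meson has_field_derivative_at_within is_interval_convex_1)
  then show ?thesis using assms(3,4) by simp
qed

lemma quadratic_if_second_DERIV_const:
  fixes F F' :: "real \<Rightarrow> real"
  assumes I: "is_interval I" "t0 \<in> I"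
    and F: "\<And>t. t \<in> I \<Longrightarrow> (F has_real_derivative F' t) (at t)"
    and F': "\<And>t. t \<in> I \<Longrightarrow> (F' has_real_derivative c) (at t)"
    and t: "t \<in> I"
  shows "F t = F t0 + F' t0 * (t - t0) + c / 2 * (t - t0)\<^sup>2"
proof -
  have F'_affine: "F' s = F' t0 + c * (s - t0)" if "s \<in> I" for s
    using DERIV_zero_constant_on_interval[OF I(1) _ that I(2), of "\<lambda>s. F' s - c * s"] F'
    by (fastforce intro!: derivative_eq_intros simp: algebra_simps)
  have "((\<lambda>s. F s - F' t0 * s - c / 2 * (s - t0)\<^sup>2) has_real_derivative 0) (at s)" if "s \<in> I" for s
    using F[OF that] F'_affine[OF that] by (auto intro!: derivative_eq_intros)
  from DERIV_zero_constant_on_interval[OF I(1) this t I(2)] show ?thesis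
    by (simp add: algebra_simps)
qed

locale vanishing_schwarzian =
  fixes I :: "real set" and t0 :: real and p p' p'' p''' :: "real \<Rightarrow> real"
  assumes interval: "is_interval I" and t0: "t0 \<in> I"
    and p: "\<And>t. t \<in> I \<Longrightarrow> (p has_real_derivative p' t) (at t)"
    and p': "\<And>t. t \<in> I \<Longrightarrow> (p' has_real_derivative p'' t) (at t)"
    and p'': "\<And>t. t \<in> I \<Longrightarrow> (p'' has_real_derivative p''' t) (at t)"
    and p'_nonzero: "\<And>t. t \<in> I \<Longrightarrow> p' t \<noteq> 0"
    and schwarzian: "\<And>t. t \<in> I \<Longrightarrow> 2 * p' t * p''' t = 3 * (p'' t)\<^sup>2"
begin

definition denom :: "real \<Rightarrow> real" where
  "denom t = 2 * p' t0 - p'' t0 * (t - t0)"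

lemma DERIV_denom: "(denom has_real_derivative - p'' t0) (at t)"
  unfolding denom_def by (auto intro!: derivative_eq_intros)

text \<open>\<open>E = p'' denom - 2 p' p'' t0\<close> solves the linear equation \<open>E' = (3 p'' / 2 p') E\<close> and
  vanishes at \<open>t0\<close>, so \<open>E\<^sup>2 / p'\<^sup>3\<close> is constant, hence zero.\<close>
lemma p''_mult_denom:
  assumes t: "t \<in> I"
  shows "p'' t * denom t = 2 * p' t * p'' t0"
proof -
  define E where "E t = p'' t * denom t - 2 * p' t * p'' t0" for t
  have "((\<lambda>s. (E s)\<^sup>2 / (p' s) ^ 3) has_real_derivative 0) (at s)" if s: "s \<in> I" for s
  proof -
    have "((\<lambda>s. (E s)\<^sup>2 / (p' s) ^ 3) has_real_derivative
        (2 * E s * (p''' s * denom s - 3 * p'' s * p'' t0) * (p' s) ^ 3 - (E s)\<^sup>2 * (3 * (p' s)\<^sup>2 * p'' s))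
          / ((p' s) ^ 3)\<^sup>2) (at s)"
      unfolding E_def using p'[OF s] p''[OF s] DERIV_denom[of s] p'_nonzero[OF s]
      by (auto intro!: derivative_eq_intros simp: algebra_simps power2_eq_square)
    moreover have "p''' s = 3 * (p'' s)\<^sup>2 / (2 * p' s)"
      using schwarzian[OF s] p'_nonzero[OF s] by (simp add: field_simps)
    ultimately show ?thesis
      using p'_nonzero[OF s] by (simp add: E_def field_simps power2_eq_square power3_eq_cube)
  qed
  from DERIV_zero_constant_on_interval[OF interval this t t0] have "(E t)\<^sup>2 / (p' t) ^ 3 = 0"
    by (simp add: E_def denom_def)
  then show ?thesis using p'_nonzero[OF t] by (simp add: E_def)
qed

lemma denom_nonzero:
  assumes t: "t \<in> I"
  shows "denom t \<noteq> 0"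
proof -
  have "((\<lambda>s. p' s * (denom s)\<^sup>2) has_real_derivative
      p'' s * (denom s)\<^sup>2 - 2 * p' s * denom s * p'' t0) (at s)" if s: "s \<in> I" for s
    using p'[OF s] DERIV_denom[of s] by (auto intro!: derivative_eq_intros)
  moreover have "p'' s * (denom s)\<^sup>2 - 2 * p' s * denom s * p'' t0 = 0" if "s \<in> I" for s
    using p''_mult_denom[OF that] by (simp add: power2_eq_square algebra_simps)
  ultimately have "((\<lambda>s. p' s * (denom s)\<^sup>2) has_real_derivative 0) (at s)" if "s \<in> I" for s
    using that by simp
  from DERIV_zero_constant_on_interval[OF interval this t t0]
  have "p' t * (denom t)\<^sup>2 = 4 * (p' t0) ^ 3"
    by (simp add: denom_def power2_eq_square power3_eq_cube)
  then show ?thesis using p'_nonzero[OF t0] by auto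
qed

lemma p_mult_denom:
  assumes t: "t \<in> I"
  shows "p t * denom t = 2 * p t0 * p' t0 + (2 * (p' t0)\<^sup>2 - p t0 * p'' t0) * (t - t0)"
proof -
  have "((\<lambda>s. p s * denom s) has_real_derivative p' s * denom s - p s * p'' t0) (at s)"
    if "s \<in> I" for s
    using p[OF that] DERIV_denom[of s] by (auto intro!: derivative_eq_intros)
  moreover have "((\<lambda>s. p' s * denom s - p s * p'' t0) has_real_derivative 0) (at s)"
    if "s \<in> I" for s
  proof -
    have "((\<lambda>s. p' s * denom s - p s * p'' t0) has_real_derivative
        p'' s * denom s - 2 * p' s * p'' t0) (at s)"
      using p[OF that] p'[OF that] DERIV_denom[of s] by (auto intro!: derivative_eq_intros)
    then show ?thesis using p''_mult_denom[OF that] by simp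
  qed
  ultimately have "p t * denom t = p t0 * denom t0 + (p' t0 * denom t0 - p t0 * p'' t0) * (t - t0)"
    using quadratic_if_second_DERIV_const[OF interval t0 _ _ t] by fastforce
  then show ?thesis by (simp add: denom_def power2_eq_square algebra_simps)
qed

lemma mult_denom_quadratic:
  fixes e e' e'' e''' :: "real \<Rightarrow> real"
  assumes e: "\<And>t. t \<in> I \<Longrightarrow> (e has_real_derivative e' t) (at t)"
    and e': "\<And>t. t \<in> I \<Longrightarrow> (e' has_real_derivative e'' t) (at t)"
    and e'': "\<And>t. t \<in> I \<Longrightarrow> (e'' has_real_derivative e''' t) (at t)"
    and T: "\<And>t. t \<in> I \<Longrightarrow> 2 * p' t * e''' t = 3 * p'' t * e'' t"
    and t: "t \<in> I"
  shows "e t * denom t = 2 * e t0 * p' t0 + (2 * e' t0 * p' t0 - e t0 * p'' t0) * (t - t0)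
    + (e'' t0 * p' t0 - e' t0 * p'' t0) * (t - t0)\<^sup>2"
proof -
  have const: "((\<lambda>s. e'' s * denom s - 2 * e' s * p'' t0) has_real_derivative 0) (at s)"
    if s: "s \<in> I" for s
  proof -
    have "((\<lambda>s. e'' s * denom s - 2 * e' s * p'' t0) has_real_derivative
        e''' s * denom s - 3 * e'' s * p'' t0) (at s)"
      using e'[OF s] e''[OF s] DERIV_denom[of s] by (auto intro!: derivative_eq_intros)
    moreover have "2 * p' s * (e''' s * denom s - 3 * e'' s * p'' t0)
        = 3 * e'' s * (p'' s * denom s - 2 * p' s * p'' t0)"
      using T[OF s] by (simp add: algebra_simps)
    ultimately show ?thesis using p''_mult_denom[OF s] p'_nonzero[OF s] by simp
  qed
  have "((\<lambda>s. e' s * denom s - e s * p'' t0) has_real_derivative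
      e'' t0 * denom t0 - 2 * e' t0 * p'' t0) (at s)" if s: "s \<in> I" for s
    using e[OF s] e'[OF s] DERIV_denom[of s] DERIV_zero_constant_on_interval[OF interval const s t0]
    by (auto intro!: derivative_eq_intros)
  moreover have "((\<lambda>s. e s * denom s) has_real_derivative e' s * denom s - e s * p'' t0) (at s)"
    if "s \<in> I" for s
    using e[OF that] DERIV_denom[of s] by (auto intro!: derivative_eq_intros)
  ultimately have "e t * denom t = e t0 * denom t0 + (e' t0 * denom t0 - e t0 * p'' t0) * (t - t0)
      + (e'' t0 * denom t0 - 2 * e' t0 * p'' t0) / 2 * (t - t0)\<^sup>2"
    using quadratic_if_second_DERIV_const[OF interval t0 _ _ t] by fastforce
  then show ?thesis by (simp add: denom_def power2_eq_square field_simps)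
qed

end

section \<open>Power series in four variables\<close>

lemma has_sum_sum:
  fixes f :: "'i \<Rightarrow> 'a \<Rightarrow> 'b::topological_comm_monoid_add"
  shows "finite I \<Longrightarrow> (\<And>i. i \<in> I \<Longrightarrow> (f i has_sum s i) A)
    \<Longrightarrow> ((\<lambda>x. \<Sum>i\<in>I. f i x) has_sum (\<Sum>i\<in>I. s i)) A"
proof (induction I rule: finite_induct)
  case empty
  then show ?case by (simp add: has_sum_0)
next
  case (insert i I)
  have "(f i has_sum s i) A" "((\<lambda>x. \<Sum>i\<in>I. f i x) has_sum (\<Sum>i\<in>I. s i)) A"
    using insert by auto
  from has_sum_add[OF this] show ?case using insert.hyps by simp
qed

lemma norm_has_sum_diff_sum_le:
  fixes f :: "'a \<Rightarrow> 'b::banach"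
  assumes f: "(f has_sum s) UNIV" and g: "g summable_on UNIV" and fg: "\<And>n. norm (f n) \<le> g n"
    and F: "finite F"
  shows "norm (s - sum f F) \<le> (\<Sum>\<^sub>\<infinity>n\<in>UNIV - F. g n)"
proof (rule norm_infsum_le)
  show "(f has_sum (s - sum f F)) (UNIV - F)"
    using has_sum_Diff[OF f has_sum_finiteI[OF F refl]] by simp
  show "(g has_sum (\<Sum>\<^sub>\<infinity>n\<in>UNIV - F. g n)) (UNIV - F)"
    using g by (intro has_sum_infsum summable_on_subset_banach[OF g]) auto
qed (rule fg)

lemma Suc_mult_power_le:
  fixes r R :: real
  assumes "0 \<le> r" "r < R"
  shows "real (Suc k) * r ^ k \<le> R ^ Suc k / (R - r)"
proof -
  have "real (Suc k) * r ^ k = (\<Sum>i<Suc k. r ^ (k - i) * r ^ i)"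
    by (simp add: power_add[symmetric])
  also have "\<dots> \<le> (\<Sum>i<Suc k. R ^ (k - i) * r ^ i)"
    using assms by (intro sum_mono mult_right_mono power_mono) auto
  also have "\<dots> = (R ^ Suc k - r ^ Suc k) / (R - r)"
    using power_diff_sumr2[of r "Suc k" R] assms by (simp add: field_simps)
  also have "\<dots> \<le> R ^ Suc k / (R - r)"
    using assms by (intro divide_right_mono) auto
  finally show ?thesis .
qed

type_synonym mindex = "nat \<times> nat \<times> nat \<times> nat"

text \<open>Components are indexed from \<open>0\<close>; every index \<open>m \<ge> 3\<close> gives the last component.\<close>
definition coord :: "'a \<times> 'a \<times> 'a \<times> 'a \<Rightarrow> nat \<Rightarrow> 'a" where
  "coord = (\<lambda>(a, b, c, d) m. if m = 0 then a else if m = 1 then b else if m = 2 then c else d)"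

lemma coord_simps [simp]:
  "coord (a, b, c, d) 0 = a" "coord (a, b, c, d) 1 = b" "coord (a, b, c, d) (Suc 0) = b"
  "coord (a, b, c, d) 2 = c" "coord (a, b, c, d) 3 = d"
  by (simp_all add: coord_def)

lemma lessThan_4: "{..<4::nat} = {0, 1, 2, 3}"
  by auto

lemma coord_linear: "linear (\<lambda>x :: R4. coord x m)"
  by (rule linearI) (auto simp: coord_def split: prod.splits)

lemma has_derivative_coord [derivative_intros]:
  "((\<lambda>x :: R4. coord x m) has_derivative (\<lambda>h. coord h m)) F"
  using coord_linear[of m] by (simp add: linear_conv_bounded_linear bounded_linear_imp_has_derivative)

lemma abs_coord_le_norm: "\<bar>coord x m\<bar> \<le> norm (x :: R4)"
proof -
  obtain a b c d where x: "x = (a, b, c, d)" by (cases x)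
  have "norm (c, d) \<le> norm x" "norm (b, c, d) \<le> norm x"
    unfolding x by (meson norm_snd_le order_trans)+
  moreover have "\<bar>a\<bar> \<le> norm x" "\<bar>b\<bar> \<le> norm (b, c, d)" "\<bar>c\<bar> \<le> norm (c, d)" "\<bar>d\<bar> \<le> norm (c, d)"
    unfolding x by (metis norm_fst_le norm_snd_le real_norm_def)+
  ultimately show ?thesis by (auto simp: coord_def x)
qed

lemma norm_le_sum_abs_coord: "norm (x :: R4) \<le> (\<Sum>m<4. \<bar>coord x m\<bar>)"
proof -
  obtain a b c d where x: "x = (a, b, c, d)" by (cases x)
  have "norm x \<le> \<bar>a\<bar> + norm (b, c, d)" "norm (b, c, d) \<le> \<bar>b\<bar> + norm (c, d)"
    "norm (c, d) \<le> \<bar>c\<bar> + \<bar>d\<bar>"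
    using norm_Pair_le[of a "(b, c, d)"] norm_Pair_le[of b "(c, d)"] norm_Pair_le[of c d]
    by (simp_all add: x)
  then show ?thesis by (simp add: x lessThan_4 coord_def)
qed

definition bump :: "nat \<Rightarrow> mindex \<Rightarrow> mindex" where
  "bump m = (\<lambda>(i, j, k, l). (if m = 0 then Suc i else i, if m = 1 then Suc j else j,
                              if m = 2 then Suc k else k, if m = 3 then Suc l else l))"

lemma inj_bump: "inj (bump m)"
  unfolding inj_def bump_def by auto

lemma coord_bump:
  assumes "m < 4" "m' < 4"
  shows "coord (bump m n) m' = (if m' = m then Suc (coord n m) else coord n m')"
proof -
  have "m \<in> {0, 1, 2, 3}" "m' \<in> {0, 1, 2, 3}" using assms by auto
  then show ?thesis by (cases n) (auto simp: bump_def coord_def)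
qed

lemma in_range_bump:
  assumes "m < 4" "coord n m \<noteq> 0"
  shows "n \<in> range (bump m)"
proof -
  obtain i j k l where n: "n = (i, j, k, l)" by (cases n)
  have "m \<in> {0, 1, 2, 3}" using assms by auto
  then have "bump m (i - of_bool (m = 0), j - of_bool (m = 1), k - of_bool (m = 2), l - of_bool (m = 3)) = n"
    using assms(2) by (auto simp: n bump_def coord_def)
  then show ?thesis by (metis rangeI)
qed

definition monomial_degree :: "mindex \<Rightarrow> nat" where
  "monomial_degree n = (\<Sum>m<4. coord n m)"

definition monomial :: "R4 \<Rightarrow> mindex \<Rightarrow> real" where
  "monomial x n = (\<Prod>m<4. coord x m ^ coord n m)"

definition monomial_partial :: "nat \<Rightarrow> R4 \<Rightarrow> mindex \<Rightarrow> real" where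
  "monomial_partial m x n =
     real (coord n m) * coord x m ^ (coord n m - 1) * (\<Prod>m'\<in>{..<4} - {m}. coord x m' ^ coord n m')"

lemma monomial_degree_bump:
  assumes "m < 4"
  shows "monomial_degree (bump m n) = Suc (monomial_degree n)"
proof -
  have "m \<in> {0, 1, 2, 3}" using assms by auto
  then show ?thesis by (auto simp: monomial_degree_def lessThan_4 coord_bump)
qed

lemma has_derivative_monomial:
  "((\<lambda>x. monomial x n) has_derivative (\<lambda>h. \<Sum>m<4. coord h m * monomial_partial m x n)) (at x)"
  unfolding monomial_def monomial_partial_def
  by (auto intro!: derivative_eq_intros sum.cong)

lemma monomial_partial_bump:
  assumes m: "m < 4"
  shows "monomial_partial m x (bump m n) = real (Suc (coord n m)) * monomial x n"
proof -
  have "(\<Prod>m'\<in>{..<4} - {m}. coord x m' ^ coord (bump m n) m')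
      = (\<Prod>m'\<in>{..<4} - {m}. coord x m' ^ coord n m')"
    using m by (intro prod.cong) (auto simp: coord_bump)
  moreover have "monomial x n = coord x m ^ coord n m * (\<Prod>m'\<in>{..<4} - {m}. coord x m' ^ coord n m')"
    unfolding monomial_def using m by (simp add: prod.remove)
  ultimately show ?thesis
    using m by (simp add: monomial_partial_def coord_bump)
qed

lemma monomial_diagonal: "monomial (s, s, s, s) n = s ^ monomial_degree n"
proof -
  have "coord (s, s, s, s) m = s" for m by (simp add: coord_def)
  then show ?thesis by (simp add: monomial_def monomial_degree_def power_sum)
qed

lemma abs_monomial_le:
  assumes "\<And>m. m < 4 \<Longrightarrow> \<bar>coord x m\<bar> \<le> r"
  shows "\<bar>monomial x n\<bar> \<le> r ^ monomial_degree n"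
  unfolding monomial_def monomial_degree_def power_sum abs_prod power_abs
  using assms by (intro prod_mono conjI power_mono) auto

lemma abs_monomial_partial_le:
  assumes m: "m < 4" and x: "\<And>m. m < 4 \<Longrightarrow> \<bar>coord x m\<bar> \<le> r" and r: "0 \<le> r" "r < R"
  shows "\<bar>monomial_partial m x n\<bar> \<le> R ^ monomial_degree n / (R - r)"
proof (cases "coord n m = 0")
  case True
  then show ?thesis using r by (simp add: monomial_partial_def)
next
  case False
  then obtain n' where n: "n = bump m n'" using in_range_bump[OF m] by blast
  have "\<bar>monomial_partial m x n\<bar> = real (Suc (coord n' m)) * \<bar>monomial x n'\<bar>"
    by (simp add: n monomial_partial_bump[OF m] abs_mult)
  also have "\<dots> \<le> real (Suc (monomial_degree n')) * r ^ monomial_degree n'"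
  proof -
    have "coord n' m \<le> monomial_degree n'"
      unfolding monomial_degree_def using m by (intro member_le_sum) auto
    then show ?thesis using r by (intro mult_mono abs_monomial_le x) auto
  qed
  also have "\<dots> \<le> R ^ monomial_degree n / (R - r)"
    using Suc_mult_power_le[OF r] by (simp add: n monomial_degree_bump[OF m])
  finally show ?thesis .
qed

definition cube :: "real \<Rightarrow> R4 set" where
  "cube \<rho> = {x. \<forall>m<4. \<bar>coord x m\<bar> < \<rho>}"

lemma Pair_in_cube_iff:
  "(a, b, c, d) \<in> cube \<rho> \<longleftrightarrow> \<bar>a\<bar> < \<rho> \<and> \<bar>b\<bar> < \<rho> \<and> \<bar>c\<bar> < \<rho> \<and> \<bar>d\<bar> < \<rho>"
proof -
  have "(\<forall>m<4. P m) \<longleftrightarrow> P 0 \<and> P 1 \<and> P 2 \<and> P 3" for P :: "nat \<Rightarrow> bool"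
    using lessThan_4 by (metis insert_iff lessThan_iff singletonD)
  then show ?thesis by (simp add: cube_def)
qed

lemma cube_mono: "\<rho>' \<le> \<rho> \<Longrightarrow> cube \<rho>' \<subseteq> cube \<rho>"
  by (auto simp: cube_def)

lemma open_cube: "open (cube \<rho>)"
proof -
  have "cube \<rho> = (\<Inter>m<4. (\<lambda>x. coord x m) -` {-\<rho><..<\<rho>})"
    by (auto simp: cube_def abs_less_iff)
  moreover have "continuous_on UNIV (\<lambda>x :: R4. coord x m)" for m
    by (rule has_derivative_continuous_on) (rule has_derivative_coord)
  ultimately show ?thesis
    by (auto intro!: open_vimage)
qed

lemma convex_cube: "convex (cube \<rho>)"
proof -
  have "cube \<rho> = (\<Inter>m<4. (\<lambda>x. coord x m) -` {-\<rho><..<\<rho>})"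
    by (auto simp: cube_def abs_less_iff)
  then show ?thesis
    by (auto intro!: convex_INT convex_linear_vimage coord_linear)
qed

lemma cube_bound:
  assumes "x \<in> cube \<rho>"
  obtains r where "0 \<le> r" "r < \<rho>" "\<And>m. m < 4 \<Longrightarrow> \<bar>coord x m\<bar> \<le> r"
proof
  define r where "r = Max ((\<lambda>m. \<bar>coord x m\<bar>) ` {..<4})"
  show xr: "\<bar>coord x m\<bar> \<le> r" if "m < 4" for m
    unfolding r_def using that by (intro Max_ge) auto
  show "0 \<le> r"
    using xr[of 0] abs_ge_zero[of "coord x 0"] by linarith
  show "r < \<rho>"
    using assms unfolding r_def cube_def by (subst Max_less_iff) (auto simp: lessThan_4)
qed

lemma norm_less_of_cube: "x \<in> cube \<rho> \<Longrightarrow> norm x < 4 * \<rho>"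
proof -
  assume "x \<in> cube \<rho>"
  then have "(\<Sum>m<4. \<bar>coord x m\<bar>) < (\<Sum>m<4::nat. \<rho>)"
    by (intro sum_strict_mono) (auto simp: cube_def lessThan_4)
  then show ?thesis using norm_le_sum_abs_coord[of x] by simp
qed

definition power_series4 :: "(mindex \<Rightarrow> real) \<Rightarrow> R4 \<Rightarrow> real" where
  "power_series4 a x = (\<Sum>\<^sub>\<infinity>n. a n * monomial x n)"

definition summable_on_cube :: "(mindex \<Rightarrow> real) \<Rightarrow> real \<Rightarrow> bool" where
  "summable_on_cube a \<rho> \<longleftrightarrow>
     (\<forall>r. 0 \<le> r \<longrightarrow> r < \<rho> \<longrightarrow> (\<lambda>n. \<bar>a n\<bar> * r ^ monomial_degree n) summable_on UNIV)"

definition partial_coeffs :: "nat \<Rightarrow> (mindex \<Rightarrow> real) \<Rightarrow> mindex \<Rightarrow> real" where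
  "partial_coeffs m a n = real (Suc (coord n m)) * a (bump m n)"

lemma summable_on_cube_mono: "summable_on_cube a \<rho> \<Longrightarrow> \<rho>' \<le> \<rho> \<Longrightarrow> summable_on_cube a \<rho>'"
  by (auto simp: summable_on_cube_def)

lemma summable_on_monomials:
  assumes a: "summable_on_cube a \<rho>" and x: "x \<in> cube \<rho>"
  shows "(\<lambda>n. a n * monomial x n) summable_on UNIV"
proof -
  obtain r where r: "0 \<le> r" "r < \<rho>" and xr: "\<And>m. m < 4 \<Longrightarrow> \<bar>coord x m\<bar> \<le> r"
    using cube_bound[OF x] by blast
  show ?thesis
  proof (rule abs_summable_summable, rule summable_on_comparison_test)
    show "(\<lambda>n. \<bar>a n\<bar> * r ^ monomial_degree n) summable_on UNIV"
      using a r by (simp add: summable_on_cube_def)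
    show "norm (a n * monomial x n) \<le> \<bar>a n\<bar> * r ^ monomial_degree n" for n
      by (simp add: abs_mult mult_left_mono abs_monomial_le xr)
  qed simp
qed

lemma summable_on_cube_partial_coeffs:
  assumes a: "summable_on_cube a \<rho>" and m: "m < 4"
  shows "summable_on_cube (partial_coeffs m a) \<rho>"
  unfolding summable_on_cube_def
proof (intro allI impI)
  fix r assume r: "0 \<le> r" "r < \<rho>"
  define R where "R = (r + \<rho>) / 2"
  have R: "0 \<le> r" "r < R" "R < \<rho>" using r by (auto simp: R_def)
  have "(\<lambda>n. \<bar>a n\<bar> * R ^ monomial_degree n) summable_on UNIV"
    using a R by (simp add: summable_on_cube_def)
  then have "(\<lambda>n. \<bar>a n\<bar> * R ^ monomial_degree n) summable_on range (bump m)"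
    by (rule summable_on_subset_banach) simp
  then have "(\<lambda>n. \<bar>a (bump m n)\<bar> * R ^ monomial_degree (bump m n)) summable_on UNIV"
    by (simp add: summable_on_reindex inj_bump o_def)
  then have "(\<lambda>n. \<bar>a (bump m n)\<bar> * R ^ monomial_degree (bump m n) / (R - r)) summable_on UNIV"
    by (simp add: divide_inverse summable_on_cmult_left)
  then show "(\<lambda>n. \<bar>partial_coeffs m a n\<bar> * r ^ monomial_degree n) summable_on UNIV"
  proof (rule summable_on_comparison_test)
    fix n
    have "coord n m \<le> monomial_degree n"
      unfolding monomial_degree_def using m by (intro member_le_sum) auto
    then have "real (Suc (coord n m)) * r ^ monomial_degree n
        \<le> real (Suc (monomial_degree n)) * r ^ monomial_degree n"
      using R by (intro mult_right_mono) auto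
    also have "\<dots> \<le> R ^ monomial_degree (bump m n) / (R - r)"
      using Suc_mult_power_le[OF R(1,2)] by (simp add: monomial_degree_bump m)
    finally have "\<bar>a (bump m n)\<bar> * (real (Suc (coord n m)) * r ^ monomial_degree n)
        \<le> \<bar>a (bump m n)\<bar> * (R ^ monomial_degree (bump m n) / (R - r))"
      by (rule mult_left_mono) simp
    then show "\<bar>partial_coeffs m a n\<bar> * r ^ monomial_degree n
        \<le> \<bar>a (bump m n)\<bar> * R ^ monomial_degree (bump m n) / (R - r)"
      by (simp add: partial_coeffs_def abs_mult mult_ac)
  qed (use R in simp)
qed

lemma has_sum_monomial_partial:
  assumes a: "summable_on_cube a \<rho>" and m: "m < 4" and x: "x \<in> cube \<rho>"
  shows "((\<lambda>n. a n * monomial_partial m x n) has_sum power_series4 (partial_coeffs m a) x) UNIV"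
proof -
  have "((\<lambda>n. partial_coeffs m a n * monomial x n) has_sum power_series4 (partial_coeffs m a) x) UNIV"
    unfolding power_series4_def
    using summable_on_monomials[OF summable_on_cube_partial_coeffs[OF a m] x] by simp
  moreover have "(\<lambda>n. a n * monomial_partial m x n) \<circ> bump m = (\<lambda>n. partial_coeffs m a n * monomial x n)"
    by (auto simp: partial_coeffs_def monomial_partial_bump[OF m])
  ultimately have "((\<lambda>n. a n * monomial_partial m x n)
      has_sum power_series4 (partial_coeffs m a) x) (range (bump m))"
    by (simp add: has_sum_reindex inj_bump)
  moreover have "a n * monomial_partial m x n = 0" if "n \<notin> range (bump m)" for n
    using in_range_bump[OF m, of n] that by (auto simp: monomial_partial_def)
  ultimately show ?thesis
    by (subst has_sum_cong_neutral[where T = "range (bump m)"]) auto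
qed

definition index_box :: "nat \<Rightarrow> mindex set" where
  "index_box N = {..N} \<times> {..N} \<times> {..N} \<times> {..N}"

lemma finite_index_box: "finite (index_box N)"
  by (simp add: index_box_def)

lemma in_index_box: "monomial_degree n \<le> N \<Longrightarrow> n \<in> index_box N"
  by (cases n) (auto simp: index_box_def monomial_degree_def lessThan_4 coord_def)

lemma has_sum_imp_tendsto_index_box:
  assumes "(f has_sum s) UNIV"
  shows "(\<lambda>N. sum f (index_box N)) \<longlonglongrightarrow> s"
proof -
  have "filterlim index_box (finite_subsets_at_top UNIV) sequentially"
    unfolding filterlim_finite_subsets_at_top
  proof (intro allI impI, elim conjE)
    fix X :: "mindex set" assume "finite X"
    then obtain N where "\<forall>n\<in>X. monomial_degree n \<le> N"
      using finite_nat_set_iff_bounded_le[of "monomial_degree ` X"] by auto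
    then have "X \<subseteq> index_box M" if "N \<le> M" for M
      using that by (blast intro: in_index_box le_trans)
    then show "\<forall>\<^sub>F N in sequentially. finite (index_box N) \<and> X \<subseteq> index_box N \<and> index_box N \<subseteq> UNIV"
      unfolding eventually_sequentially by (auto simp: finite_index_box)
  qed
  with assms show ?thesis
    unfolding has_sum_def by (rule filterlim_compose[unfolded o_def])
qed

lemma tendsto_infsum_complement_index_box:
  fixes g :: "mindex \<Rightarrow> 'b::banach"
  assumes g: "g summable_on UNIV"
  shows "(\<lambda>N. \<Sum>\<^sub>\<infinity>n\<in>UNIV - index_box N. g n) \<longlonglongrightarrow> 0"
proof -
  have "(\<Sum>\<^sub>\<infinity>n\<in>UNIV - index_box N. g n) = infsum g UNIV - sum g (index_box N)" for N
    using infsum_Diff[OF g summable_on_subset_banach[OF g]] finite_index_box by simp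
  moreover have "(\<lambda>N. infsum g UNIV - sum g (index_box N)) \<longlonglongrightarrow> infsum g UNIV - infsum g UNIV"
    using g by (intro tendsto_diff tendsto_const has_sum_imp_tendsto_index_box) auto
  ultimately show ?thesis by simp
qed

lemma has_sum_partial_derivative_terms:
  assumes "summable_on_cube a \<rho>" "x \<in> cube \<rho>"
  shows "((\<lambda>n. a n * (\<Sum>m<4. coord h m * monomial_partial m x n))
           has_sum (\<Sum>m<4. coord h m * power_series4 (partial_coeffs m a) x)) UNIV"
proof -
  have "((\<lambda>n. a n * (coord h m * monomial_partial m x n))
      has_sum coord h m * power_series4 (partial_coeffs m a) x) UNIV" if "m < 4" for m
    using has_sum_cmult_right[OF has_sum_monomial_partial[OF assms(1) that assms(2)], of "coord h m"]
    by (simp add: mult.left_commute)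
  then show ?thesis
    unfolding sum_distrib_left by (intro has_sum_sum) auto
qed

lemma abs_partial_derivative_term_le:
  assumes x: "\<And>m. m < 4 \<Longrightarrow> \<bar>coord x m\<bar> \<le> r" and r: "0 \<le> r" "r < R"
  shows "\<bar>a n * (\<Sum>m<4. coord h m * monomial_partial m x n)\<bar>
           \<le> 4 * \<bar>a n\<bar> * R ^ monomial_degree n / (R - r) * norm h"
proof -
  have term_le: "\<bar>coord h m * monomial_partial m x n\<bar> \<le> norm h * (R ^ monomial_degree n / (R - r))"
    if "m < 4" for m
    unfolding abs_mult by (intro mult_mono abs_coord_le_norm abs_monomial_partial_le x r that) auto
  have "\<bar>\<Sum>m<4. coord h m * monomial_partial m x n\<bar> \<le> (\<Sum>m<4. \<bar>coord h m * monomial_partial m x n\<bar>)"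
    by (rule sum_abs)
  also have "\<dots> \<le> (\<Sum>m<4::nat. norm h * (R ^ monomial_degree n / (R - r)))"
    by (intro sum_mono term_le) simp
  also have "\<dots> = 4 * (norm h * (R ^ monomial_degree n / (R - r)))"
    by simp
  finally have "\<bar>a n\<bar> * \<bar>\<Sum>m<4. coord h m * monomial_partial m x n\<bar>
      \<le> \<bar>a n\<bar> * (4 * (norm h * (R ^ monomial_degree n / (R - r))))"
    by (rule mult_left_mono) simp
  then show ?thesis by (simp add: abs_mult mult_ac)
qed

lemma uniform_convergence_partial_derivative_sums:
  assumes a: "summable_on_cube a \<rho>" and r: "0 \<le> r" "r < \<rho>" and e: "e > 0"
  shows "\<forall>\<^sub>F N in sequentially. \<forall>y\<in>cube r. \<forall>h.
    norm ((\<Sum>n\<in>index_box N. a n * (\<Sum>m<4. coord h m * monomial_partial m y n))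
      - (\<Sum>m<4. coord h m * power_series4 (partial_coeffs m a) y)) \<le> e * norm h"
proof -
  define R where "R = (r + \<rho>) / 2"
  have R: "r < R" "R < \<rho>" using r by (auto simp: R_def)
  define M where "M n = 4 * \<bar>a n\<bar> * R ^ monomial_degree n / (R - r)" for n
  have "(\<lambda>n. 4 / (R - r) * (\<bar>a n\<bar> * R ^ monomial_degree n)) summable_on UNIV"
    using a r R by (intro summable_on_cmult_right) (simp add: summable_on_cube_def)
  then have M: "M summable_on UNIV"
    unfolding M_def[abs_def] by (simp add: mult_ac)
  show ?thesis
    using order_tendstoD(2)[OF tendsto_infsum_complement_index_box[OF M] e]
  proof eventually_elim
    case (elim N)
    show ?case
    proof (intro ballI allI)
      fix y h assume y: "y \<in> cube r"
      then have "y \<in> cube \<rho>" and y_le: "\<And>m. m < 4 \<Longrightarrow> \<bar>coord y m\<bar> \<le> r"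
        using R by (auto simp: cube_def less_imp_le)
      have "norm ((\<Sum>m<4. coord h m * power_series4 (partial_coeffs m a) y)
          - (\<Sum>n\<in>index_box N. a n * (\<Sum>m<4. coord h m * monomial_partial m y n)))
          \<le> (\<Sum>\<^sub>\<infinity>n\<in>UNIV - index_box N. M n * norm h)"
        using has_sum_partial_derivative_terms[OF a \<open>y \<in> cube \<rho>\<close>]
          abs_partial_derivative_term_le[OF y_le r(1) R(1)]
        by (intro norm_has_sum_diff_sum_le summable_on_cmult_left M finite_index_box) (simp_all add: M_def)
      also have "\<dots> = (\<Sum>\<^sub>\<infinity>n\<in>UNIV - index_box N. M n) * norm h"
        by (intro infsum_cmult_left summable_on_subset_banach[OF M]) auto
      also have "\<dots> \<le> e * norm h"
        using elim by (intro mult_right_mono) auto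
      finally show "norm ((\<Sum>n\<in>index_box N. a n * (\<Sum>m<4. coord h m * monomial_partial m y n))
          - (\<Sum>m<4. coord h m * power_series4 (partial_coeffs m a) y)) \<le> e * norm h"
        by (simp add: norm_minus_commute)
    qed
  qed
qed

lemma has_derivative_power_series4:
  assumes a: "summable_on_cube a \<rho>" and x: "x \<in> cube \<rho>"
  shows "(power_series4 a has_derivative
           (\<lambda>h. \<Sum>m<4. coord h m * power_series4 (partial_coeffs m a) x)) (at x)"
proof -
  obtain r0 where r0: "0 \<le> r0" "r0 < \<rho>" "\<And>m. m < 4 \<Longrightarrow> \<bar>coord x m\<bar> \<le> r0"
    using cube_bound[OF x] by blast
  define r where "r = (r0 + \<rho>) / 2"
  have r: "0 \<le> r" "r < \<rho>" using r0 by (auto simp: r_def)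
  have x_in: "x \<in> cube r" using r0 by (force simp: cube_def r_def)
  define D where "D y = (\<lambda>h. \<Sum>m<4. coord h m * power_series4 (partial_coeffs m a) y)" for y
  have partial_sums: "((\<lambda>y. \<Sum>n\<in>index_box N. a n * monomial y n) has_derivative
      (\<lambda>h. \<Sum>n\<in>index_box N. a n * (\<Sum>m<4. coord h m * monomial_partial m y n))) (at y within cube r)"
    for N y
    by (rule has_derivative_at_withinI)
       (intro has_derivative_sum has_derivative_mult_right has_derivative_monomial)
  have tendsto_partial_sums: "(\<lambda>N. \<Sum>n\<in>index_box N. a n * monomial y n) \<longlonglongrightarrow> power_series4 a y"
    if "y \<in> cube r" for y
    using has_sum_infsum[OF summable_on_monomials[OF a subsetD[OF cube_mono[OF less_imp_le[OF r(2)]] that]]]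
    unfolding power_series4_def by (rule has_sum_imp_tendsto_index_box)
  obtain g where g: "\<forall>y\<in>cube r. (\<lambda>N. \<Sum>n\<in>index_box N. a n * monomial y n) \<longlonglongrightarrow> g y
      \<and> (g has_derivative D y) (at y within cube r)"
    using has_derivative_sequence[where f = "\<lambda>N y. \<Sum>n\<in>index_box N. a n * monomial y n"
        and f' = "\<lambda>N y h. \<Sum>n\<in>index_box N. a n * (\<Sum>m<4. coord h m * monomial_partial m y n)"
        and g' = D, unfolded D_def,
        OF convex_cube partial_sums uniform_convergence_partial_derivative_sums[OF a r]
        x_in tendsto_partial_sums[OF x_in]]
    unfolding D_def by blast
  have "power_series4 a y = g y" if "y \<in> cube r" for y
  proof -
    have "(\<lambda>N. \<Sum>n\<in>index_box N. a n * monomial y n) \<longlonglongrightarrow> g y" using g that by blast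
    then show ?thesis by (rule LIMSEQ_unique[OF tendsto_partial_sums[OF that]])
  qed
  moreover have "(g has_derivative D x) (at x within cube r)" using g x_in by blast
  ultimately have "(power_series4 a has_derivative D x) (at x within cube r)"
    by (rule has_derivative_transform[OF x_in])
  then show ?thesis
    using at_within_open[OF x_in open_cube] by (simp add: D_def)
qed

lemma Ck_on_power_series4:
  assumes "summable_on_cube a \<rho>"
  shows "Ck_on k (cube \<rho>) (power_series4 a)"
  using assms
proof (induction k arbitrary: a)
  case 0
  then show ?case
    by (auto intro!: continuous_at_imp_continuous_on has_derivative_continuous has_derivative_power_series4)
next
  case (Suc k)
  have "Ck_on k (cube \<rho>) (power_series4 (partial_coeffs m a))" if "m < 4" for m
    using Suc.IH summable_on_cube_partial_coeffs[OF Suc.prems that] by blast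
  then have "Ck_on k (cube \<rho>) (\<lambda>x. \<Sum>m<4. coord v m * power_series4 (partial_coeffs m a) x)" for v
    by (intro Ck_on_sum Ck_on_mult Ck_on_const) auto
  then show ?case
    using has_derivative_power_series4[OF Suc.prems]
    by (auto intro!: exI[of _ "\<lambda>x h. \<Sum>m<4. coord h m * power_series4 (partial_coeffs m a) x"])
qed

section \<open>Real analytic functions as local power series\<close>

definition local_power_series :: "(R4 \<Rightarrow> real) \<Rightarrow> R4 \<Rightarrow> real \<Rightarrow> (mindex \<Rightarrow> real) \<Rightarrow> bool" where
  "local_power_series f p \<rho> a \<longleftrightarrow>
     summable_on_cube a \<rho> \<and> (\<forall>q. q - p \<in> cube \<rho> \<longrightarrow> f q = power_series4 a (q - p))"

lemma local_power_series_mono: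
  "local_power_series f p \<rho> a \<Longrightarrow> \<rho>' \<le> \<rho> \<Longrightarrow> local_power_series f p \<rho>' a"
  unfolding local_power_series_def by (meson cube_mono subsetD summable_on_cube_mono)

lemma real_analytic_on4_imp_local_power_series:
  assumes "real_analytic_on4 U f" "p \<in> U"
  obtains \<rho> a where "\<rho> > 0" "local_power_series f p \<rho> a"
proof -
  obtain r c where r: "r > 0" and c: "\<forall>q\<in>ball p r.
      ((\<lambda>(i,j,k,l). c i j k l * (fst q - fst p) ^ i * (fst (snd q) - fst (snd p)) ^ j
          * (fst (snd (snd q)) - fst (snd (snd p))) ^ k
          * (snd (snd (snd q)) - snd (snd (snd p))) ^ l) has_sum f q) UNIV"
    using assms unfolding real_analytic_on4_def by blast
  define a :: "mindex \<Rightarrow> real" where "a = (\<lambda>(i, j, k, l). c i j k l)"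
  have terms: "(\<lambda>(i,j,k,l). c i j k l * (fst q - fst p) ^ i * (fst (snd q) - fst (snd p)) ^ j
          * (fst (snd (snd q)) - fst (snd (snd p))) ^ k
          * (snd (snd (snd q)) - snd (snd (snd p))) ^ l) = (\<lambda>n. a n * monomial (q - p) n)" for q
  proof -
    obtain q1 q2 q3 q4 where q: "q = (q1, q2, q3, q4)" by (cases q)
    obtain p1 p2 p3 p4 where p: "p = (p1, p2, p3, p4)" by (cases p)
    show ?thesis by (auto simp: q p a_def monomial_def lessThan_4 fun_eq_iff)
  qed
  have has_sum: "((\<lambda>n. a n * monomial (q - p) n) has_sum f q) UNIV" if "q - p \<in> cube (r / 4)" for q
  proof -
    have "q \<in> ball p r"
      using norm_less_of_cube[OF that] by (simp add: dist_norm norm_minus_commute)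
    then show ?thesis using c by (simp only: terms)
  qed
  have "summable_on_cube a (r / 4)"
    unfolding summable_on_cube_def
  proof (intro allI impI)
    fix s :: real assume s: "0 \<le> s" "s < r / 4"
    then have "(s, s, s, s) \<in> cube (r / 4)" by (simp add: Pair_in_cube_iff)
    then have "(\<lambda>n. a n * monomial (s, s, s, s) n) summable_on UNIV"
      using has_sum[of "p + (s, s, s, s)"] unfolding summable_on_def by auto
    then have "(\<lambda>n. norm (a n * monomial (s, s, s, s) n)) summable_on UNIV"
      by (rule summable_on_iff_abs_summable_on_real[THEN iffD1])
    moreover have "norm (a n * monomial (s, s, s, s) n) = \<bar>a n\<bar> * s ^ monomial_degree n" for n
      using s by (simp add: monomial_diagonal abs_mult)
    ultimately show "(\<lambda>n. \<bar>a n\<bar> * s ^ monomial_degree n) summable_on UNIV"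
      by simp
  qed
  moreover have "f q = power_series4 a (q - p)" if "q - p \<in> cube (r / 4)" for q
    using has_sum[OF that] unfolding power_series4_def by (rule infsumI[symmetric])
  ultimately have "local_power_series f p (r / 4) a"
    by (simp add: local_power_series_def)
  with r show ?thesis by (intro that[of "r / 4"]) auto
qed

lemma local_power_series_DERIV:
  assumes f: "local_power_series f p \<rho> a" and q: "(x, y, z, t) - p \<in> cube \<rho>"
  shows "((\<lambda>s. f (x, y, z, s)) has_real_derivative
           power_series4 (partial_coeffs 3 a) ((x, y, z, t) - p)) (at t)"
proof -
  have a: "summable_on_cube a \<rho>" and f_eq: "\<And>q. q - p \<in> cube \<rho> \<Longrightarrow> f q = power_series4 a (q - p)"
    using f by (auto simp: local_power_series_def)
  define U where "U = (\<lambda>s. (x, y, z, s) - p) -` cube \<rho>"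
  have "open U"
    unfolding U_def by (intro open_vimage open_cube continuous_intros)
  have "((\<lambda>s. (x, y, z, s) - p) has_derivative (\<lambda>h. (0, 0, 0, h))) (at t)"
    by (auto intro!: derivative_eq_intros)
  from diff_chain_at[OF this has_derivative_power_series4[OF a q]]
  have "((\<lambda>s. power_series4 a ((x, y, z, s) - p)) has_real_derivative
      power_series4 (partial_coeffs 3 a) ((x, y, z, t) - p)) (at t)"
    unfolding has_field_derivative_def by (simp add: o_def lessThan_4 mult_commute_abs)
  moreover have "t \<in> U" using q by (simp add: U_def)
  ultimately show ?thesis
    by (rule has_field_derivative_transform_within_open[OF _ \<open>open U\<close>]) (simp add: U_def f_eq)
qed

lemma local_power_series_d4:
  assumes f: "local_power_series f p \<rho> a"
  shows "local_power_series (d4 f) p \<rho> (partial_coeffs 3 a)"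
  unfolding local_power_series_def
proof (intro conjI allI impI)
  show "summable_on_cube (partial_coeffs 3 a) \<rho>"
    using f by (simp add: local_power_series_def summable_on_cube_partial_coeffs)
  fix q assume "q - p \<in> cube \<rho>"
  moreover obtain x y z t where "q = (x, y, z, t)" by (cases q)
  ultimately show "d4 f q = power_series4 (partial_coeffs 3 a) (q - p)"
    using local_power_series_DERIV[OF f] by (simp add: d4_def DERIV_imp_deriv)
qed

lemma local_power_series_funpow_d4:
  "local_power_series f p \<rho> a \<Longrightarrow> local_power_series ((d4 ^^ k) f) p \<rho> ((partial_coeffs 3 ^^ k) a)"
  by (induction k) (simp_all add: local_power_series_d4)

lemma local_power_series_DERIV_funpow_d4:
  assumes f: "local_power_series f p \<rho> a" and q: "(x, y, z, t) - p \<in> cube \<rho>"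
  shows "((\<lambda>s. (d4 ^^ k) f (x, y, z, s)) has_real_derivative (d4 ^^ Suc k) f (x, y, z, t)) (at t)"
proof -
  note fk = local_power_series_funpow_d4[OF f, of k]
  show ?thesis
    using local_power_series_DERIV[OF fk q] local_power_series_d4[OF fk] q
    by (simp add: local_power_series_def)
qed

lemma open_slice: "open {(x, y, z). (x, y, z, t) - p \<in> cube \<rho>}"
proof -
  have "{(x, y, z). (x, y, z, t) - p \<in> cube \<rho>}
      = (\<lambda>w. (fst w, fst (snd w), snd (snd w), t) - p) -` cube \<rho>"
    by auto
  then show ?thesis
    by (simp only:) (intro open_vimage open_cube continuous_intros)
qed

lemma smooth_on_slice:
  assumes f: "local_power_series f p \<rho> a"
  shows "smooth_on {(x, y, z). (x, y, z, t) - p \<in> cube \<rho>} (\<lambda>(x, y, z). f (x, y, z, t))"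
  unfolding smooth_on_def
proof
  fix k
  have a: "summable_on_cube a \<rho>" and f_eq: "\<And>q. q - p \<in> cube \<rho> \<Longrightarrow> f q = power_series4 a (q - p)"
    using f by (auto simp: local_power_series_def)
  define L where "L w = (fst w, fst (snd w), snd (snd w), t) - p" for w :: R3
  have L: "(L has_derivative (\<lambda>h. (fst h, fst (snd h), snd (snd h), 0))) (at w)" for w
    unfolding L_def by (auto intro!: derivative_eq_intros)
  have Ck: "Ck_on k {(x, y, z). (x, y, z, t) - p \<in> cube \<rho>} (\<lambda>w. power_series4 a (L w))"
    by (rule Ck_on_compose_affine[OF L _ Ck_on_power_series4[OF a]]) (auto simp: L_def)
  have eq: "power_series4 a (L w) = (\<lambda>(x, y, z). f (x, y, z, t)) w"
    if "w \<in> {(x, y, z). (x, y, z, t) - p \<in> cube \<rho>}" for w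
  proof -
    obtain x y z where w: "w = (x, y, z)" by (cases w)
    show ?thesis using that f_eq[of "(x, y, z, t)"] by (simp add: w L_def)
  qed
  show "Ck_on k {(x, y, z). (x, y, z, t) - p \<in> cube \<rho>} (\<lambda>(x, y, z). f (x, y, z, t))"
    by (rule Ck_on_cong[OF open_slice eq Ck])
qed

lemma common_local_power_series:
  assumes "open \<Omega>" "real_analytic_on4 \<Omega> g" "real_analytic_on4 \<Omega> h" "p \<in> \<Omega>"
  obtains \<rho> ag ah where "\<rho> > 0" "local_power_series g p \<rho> ag" "local_power_series h p \<rho> ah"
    "\<And>q. q - p \<in> cube \<rho> \<Longrightarrow> q \<in> \<Omega>"
proof -
  obtain \<rho>g ag where \<rho>g: "\<rho>g > 0" "local_power_series g p \<rho>g ag"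
    using real_analytic_on4_imp_local_power_series[OF assms(2,4)] .
  obtain \<rho>h ah where \<rho>h: "\<rho>h > 0" "local_power_series h p \<rho>h ah"
    using real_analytic_on4_imp_local_power_series[OF assms(3,4)] .
  obtain e where e: "e > 0" "ball p e \<subseteq> \<Omega>"
    using assms(1,4) open_contains_ball by blast
  define \<rho> where "\<rho> = min (e / 4) (min \<rho>g \<rho>h)"
  have "q \<in> \<Omega>" if "q - p \<in> cube \<rho>" for q
    using norm_less_of_cube[OF that] e by (auto simp: \<rho>_def dist_norm norm_minus_commute)
  then show ?thesis
    using \<rho>g \<rho>h e by (intro that[of \<rho>]) (auto simp: \<rho>_def intro: local_power_series_mono)
qed

section \<open>Linear fractional normal form\<close>

lemma mobius_normal_form_on_slice:
  assumes g: "local_power_series g p \<rho> ag" and h: "local_power_series h p \<rho> ah"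
    and I: "is_interval I" "t0 \<in> I" and slice: "\<And>t. t \<in> I \<Longrightarrow> (x, y, z, t) - p \<in> cube \<rho>"
    and nonzero: "\<And>t. t \<in> I \<Longrightarrow> d4 g (x, y, z, t) \<noteq> 0"
    and S: "\<And>t. t \<in> I \<Longrightarrow>
      2 * d4 g (x, y, z, t) * (d4 ^^ 3) g (x, y, z, t) = 3 * ((d4 ^^ 2) g (x, y, z, t))\<^sup>2"
    and T: "\<And>t. t \<in> I \<Longrightarrow>
      2 * d4 g (x, y, z, t) * (d4 ^^ 3) h (x, y, z, t) = 3 * (d4 ^^ 2) g (x, y, z, t) * (d4 ^^ 2) h (x, y, z, t)"
    and t: "t \<in> I"
  defines "G \<equiv> \<lambda>k. (d4 ^^ k) g (x, y, z, t0)" and "E \<equiv> \<lambda>k. (d4 ^^ k) h (x, y, z, t0)"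
  shows "2 * G 1 - G 2 * (t - t0) \<noteq> 0" (is ?denom)
    and "g (x, y, z, t) * (2 * G 1 - G 2 * (t - t0))
      = 2 * G 0 * G 1 + (2 * (G 1)\<^sup>2 - G 0 * G 2) * (t - t0)" (is ?g)
    and "h (x, y, z, t) * (2 * G 1 - G 2 * (t - t0))
      = 2 * E 0 * G 1 + (2 * E 1 * G 1 - E 0 * G 2) * (t - t0) + (E 2 * G 1 - E 1 * G 2) * (t - t0)\<^sup>2"
      (is ?h)
proof -
  note DERIV_g = local_power_series_DERIV_funpow_d4[OF g slice]
  note DERIV_h = local_power_series_DERIV_funpow_d4[OF h slice]
  interpret vanishing_schwarzian I t0 "\<lambda>t. g (x, y, z, t)" "\<lambda>t. d4 g (x, y, z, t)"
    "\<lambda>t. (d4 ^^ 2) g (x, y, z, t)" "\<lambda>t. (d4 ^^ 3) g (x, y, z, t)"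
    using I nonzero S DERIV_g[of _ 0] DERIV_g[of _ 1] DERIV_g[of _ 2]
    by unfold_locales (simp_all add: numeral_2_eq_2 numeral_3_eq_3)
  have "((\<lambda>s. h (x, y, z, s)) has_real_derivative d4 h (x, y, z, s)) (at s)"
    and "((\<lambda>s. d4 h (x, y, z, s)) has_real_derivative (d4 ^^ 2) h (x, y, z, s)) (at s)"
    and "((\<lambda>s. (d4 ^^ 2) h (x, y, z, s)) has_real_derivative (d4 ^^ 3) h (x, y, z, s)) (at s)"
    if "s \<in> I" for s
    using DERIV_h[OF that, of 0] DERIV_h[OF that, of 1] DERIV_h[OF that, of 2]
    by (simp_all add: numeral_2_eq_2 numeral_3_eq_3)
  note h_mult_denom = mult_denom_quadratic[OF this T t]
  have "denom t = 2 * G 1 - G 2 * (t - t0)"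
    by (simp add: denom_def G_def)
  then show ?denom ?g ?h
    using denom_nonzero[OF t] p_mult_denom[OF t] h_mult_denom
    by (simp_all add: G_def E_def numeral_2_eq_2 numeral_3_eq_3)
qed

lemma smooth_linear_fractional_coefficients:
  fixes g h :: "R4 \<Rightarrow> real" and G E :: "nat \<Rightarrow> R3 \<Rightarrow> real"
  assumes smooth: "\<And>k. smooth_on W (G k)" "\<And>k. smooth_on W (E k)" and l0: "l0 \<in> I"
    and normal_form: "\<forall>x y z l. (x, y, z) \<in> W \<longrightarrow> l \<in> I \<longrightarrow>
      2 * G 1 (x, y, z) - G 2 (x, y, z) * (l - l0) \<noteq> 0
      \<and> g (x, y, z, l) * (2 * G 1 (x, y, z) - G 2 (x, y, z) * (l - l0))
        = 2 * G 0 (x, y, z) * G 1 (x, y, z) + (2 * (G 1 (x, y, z))\<^sup>2 - G 0 (x, y, z) * G 2 (x, y, z)) * (l - l0)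
      \<and> h (x, y, z, l) * (2 * G 1 (x, y, z) - G 2 (x, y, z) * (l - l0))
        = 2 * E 0 (x, y, z) * G 1 (x, y, z) + (2 * E 1 (x, y, z) * G 1 (x, y, z) - E 0 (x, y, z) * G 2 (x, y, z)) * (l - l0)
          + (E 2 (x, y, z) * G 1 (x, y, z) - E 1 (x, y, z) * G 2 (x, y, z)) * (l - l0)\<^sup>2"
  shows "\<exists>a0 a1 a2 b0 b1 c0 c1 :: R3 \<Rightarrow> real.
           smooth_on W a0 \<and> smooth_on W a1 \<and> smooth_on W a2 \<and> smooth_on W b0
         \<and> smooth_on W b1 \<and> smooth_on W c0 \<and> smooth_on W c1
         \<and> (\<forall>w\<in>W. \<forall>l\<in>I. c0 w + c1 w * l \<noteq> 0)
         \<and> (\<forall>w\<in>W. c1 w * b0 w - b1 w * c0 w \<noteq> 0)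
         \<and> (\<forall>x y z l. (x, y, z) \<in> W \<longrightarrow> l \<in> I \<longrightarrow>
              (\<forall>xd zd :: real.
                 zd = h (x, y, z, l) + g (x, y, z, l) * xd \<longleftrightarrow>
                 l * (b1 (x,y,z) * xd + a2 (x,y,z) * l - c1 (x,y,z) * zd)
                 + (b0 (x,y,z) * xd + a1 (x,y,z) * l - c0 (x,y,z) * zd) + a0 (x,y,z) = 0))"
proof -
  txt \<open>The coefficients of \<open>D = c0 + c1 l\<close>, \<open>g D = b0 + b1 l\<close> and \<open>h D = a0 + a1 l + a2 l\<^sup>2\<close>
    as polynomials in \<open>l\<close>, where \<open>D = 2 G 1 - G 2 (l - l0)\<close>.\<close>
  define c1 where "c1 w = - G 2 w" for w
  define c0 where "c0 w = 2 * G 1 w + G 2 w * l0" for w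
  define b1 where "b1 w = 2 * G 1 w * G 1 w - G 0 w * G 2 w" for w
  define b0 where "b0 w = 2 * G 0 w * G 1 w - b1 w * l0" for w
  define a2 where "a2 w = E 2 w * G 1 w - E 1 w * G 2 w" for w
  define a1 where "a1 w = 2 * E 1 w * G 1 w - E 0 w * G 2 w - 2 * a2 w * l0" for w
  define a0 where "a0 w = 2 * E 0 w * G 1 w - (2 * E 1 w * G 1 w - E 0 w * G 2 w) * l0 + a2 w * l0\<^sup>2" for w
  show ?thesis
  proof (intro exI conjI)
    show "smooth_on W a0" "smooth_on W a1" "smooth_on W a2" "smooth_on W b0"
      "smooth_on W b1" "smooth_on W c0" "smooth_on W c1"
      unfolding a0_def a1_def a2_def b0_def b1_def c0_def c1_def
      by (intro smooth_on_add smooth_on_diff smooth_on_mult smooth_on_uminus smooth_on_const smooth)+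
    show "\<forall>w\<in>W. \<forall>l\<in>I. c0 w + c1 w * l \<noteq> 0"
      using normal_form by (auto simp: c0_def c1_def algebra_simps)
    show "\<forall>w\<in>W. c1 w * b0 w - b1 w * c0 w \<noteq> 0"
    proof
      fix w assume "w \<in> W"
      moreover obtain x y z where "w = (x, y, z)" by (cases w)
      ultimately have "2 * G 1 w - G 2 w * (l0 - l0) \<noteq> 0"
        using normal_form l0 by blast
      then have "G 1 w \<noteq> 0" by simp
      then show "c1 w * b0 w - b1 w * c0 w \<noteq> 0"
        by (simp add: c0_def c1_def b0_def b1_def algebra_simps power2_eq_square)
    qed
    show "\<forall>x y z l. (x, y, z) \<in> W \<longrightarrow> l \<in> I \<longrightarrow> (\<forall>xd zd :: real.
        zd = h (x, y, z, l) + g (x, y, z, l) * xd \<longleftrightarrow>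
        l * (b1 (x, y, z) * xd + a2 (x, y, z) * l - c1 (x, y, z) * zd)
        + (b0 (x, y, z) * xd + a1 (x, y, z) * l - c0 (x, y, z) * zd) + a0 (x, y, z) = 0)"
    proof (intro allI impI)
      fix x y z l xd zd assume "(x, y, z) \<in> W" "l \<in> I"
      define D where "D = 2 * G 1 (x, y, z) - G 2 (x, y, z) * (l - l0)"
      have "D \<noteq> 0" and gD: "g (x, y, z, l) * D
          = 2 * G 0 (x, y, z) * G 1 (x, y, z) + (2 * (G 1 (x, y, z))\<^sup>2 - G 0 (x, y, z) * G 2 (x, y, z)) * (l - l0)"
        and hD: "h (x, y, z, l) * D
          = 2 * E 0 (x, y, z) * G 1 (x, y, z) + (2 * E 1 (x, y, z) * G 1 (x, y, z) - E 0 (x, y, z) * G 2 (x, y, z)) * (l - l0)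
            + (E 2 (x, y, z) * G 1 (x, y, z) - E 1 (x, y, z) * G 2 (x, y, z)) * (l - l0)\<^sup>2"
        using normal_form \<open>(x, y, z) \<in> W\<close> \<open>l \<in> I\<close> by (simp_all add: D_def)
      have "l * (b1 (x, y, z) * xd + a2 (x, y, z) * l - c1 (x, y, z) * zd)
          + (b0 (x, y, z) * xd + a1 (x, y, z) * l - c0 (x, y, z) * zd) + a0 (x, y, z)
        = (2 * G 0 (x, y, z) * G 1 (x, y, z) + (2 * (G 1 (x, y, z))\<^sup>2 - G 0 (x, y, z) * G 2 (x, y, z)) * (l - l0)) * xd
          + (2 * E 0 (x, y, z) * G 1 (x, y, z) + (2 * E 1 (x, y, z) * G 1 (x, y, z) - E 0 (x, y, z) * G 2 (x, y, z)) * (l - l0)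
            + (E 2 (x, y, z) * G 1 (x, y, z) - E 1 (x, y, z) * G 2 (x, y, z)) * (l - l0)\<^sup>2)
          - D * zd"
        by (simp add: D_def a0_def a1_def a2_def b0_def b1_def c0_def c1_def algebra_simps power2_eq_square)
      also have "\<dots> = D * (h (x, y, z, l) + g (x, y, z, l) * xd - zd)"
        unfolding gD[symmetric] hD[symmetric] by (simp add: algebra_simps)
      finally show "zd = h (x, y, z, l) + g (x, y, z, l) * xd \<longleftrightarrow>
          l * (b1 (x, y, z) * xd + a2 (x, y, z) * l - c1 (x, y, z) * zd)
          + (b0 (x, y, z) * xd + a1 (x, y, z) * l - c0 (x, y, z) * zd) + a0 (x, y, z) = 0"
        using \<open>D \<noteq> 0\<close> by auto
    qed
  qed
qed

theorem proposition4p1: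
  fixes \<Omega> :: "R4 set" and g h :: "R4 \<Rightarrow> real"
  assumes "open \<Omega>" and "connected \<Omega>"
    and "real_analytic_on4 \<Omega> g" and "real_analytic_on4 \<Omega> h"
    and "\<forall>p\<in>\<Omega>. d4 g p \<noteq> 0"
    and "diffeo_onto_image \<Omega> (\<lambda>(x,y,z,l). (x,y,z,g (x,y,z,l)))"
    and S0: "\<forall>p\<in>\<Omega>. 2 * d4 g p * (d4 ^^ 3) g p - 3 * ((d4 ^^ 2) g p)\<^sup>2 = 0"
    and T0: "\<forall>p\<in>\<Omega>. 2 * d4 g p * (d4 ^^ 3) h p - 3 * (d4 ^^ 2) g p * (d4 ^^ 2) h p = 0"
    and "(x0, y0, z0, l0) \<in> \<Omega>"
  shows "\<exists>(W :: R3 set) (I :: real set) (a0 :: R3 \<Rightarrow> real) a1 a2 b0 b1 c0 c1.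
           open W \<and> open I \<and> is_interval I \<and> (x0, y0, z0) \<in> W \<and> l0 \<in> I
         \<and> {(x, y, z, l) | x y z l. (x, y, z) \<in> W \<and> l \<in> I} \<subseteq> \<Omega>
         \<and> smooth_on W a0 \<and> smooth_on W a1 \<and> smooth_on W a2 \<and> smooth_on W b0
         \<and> smooth_on W b1 \<and> smooth_on W c0 \<and> smooth_on W c1
         \<and> (\<forall>w\<in>W. \<forall>l\<in>I. c0 w + c1 w * l \<noteq> 0)
         \<and> (\<forall>w\<in>W. c1 w * b0 w - b1 w * c0 w \<noteq> 0)
         \<and> (\<forall>x y z l. (x, y, z) \<in> W \<longrightarrow> l \<in> I \<longrightarrow>
              (\<forall>xd zd :: real.
                 zd = h (x, y, z, l) + g (x, y, z, l) * xd \<longleftrightarrow>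
                 l * (b1 (x,y,z) * xd + a2 (x,y,z) * l - c1 (x,y,z) * zd)
                 + (b0 (x,y,z) * xd + a1 (x,y,z) * l - c0 (x,y,z) * zd) + a0 (x,y,z) = 0))"
proof -
  define p0 where "p0 = (x0, y0, z0, l0)"
  obtain \<rho> ag ah where \<rho>: "\<rho> > 0" and g: "local_power_series g p0 \<rho> ag"
    and h: "local_power_series h p0 \<rho> ah" and in_\<Omega>: "\<And>q. q - p0 \<in> cube \<rho> \<Longrightarrow> q \<in> \<Omega>"
    using common_local_power_series[OF assms(1,3,4) assms(9)[folded p0_def]] by blast
  define W where "W = {(x, y, z). (x, y, z, l0) - p0 \<in> cube \<rho>}"
  define I where "I = {l0 - \<rho><..<l0 + \<rho>}"
  have WI: "(x, y, z, l) - p0 \<in> cube \<rho> \<longleftrightarrow> (x, y, z) \<in> W \<and> l \<in> I" for x y z l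
    by (auto simp: W_def I_def p0_def Pair_in_cube_iff abs_less_iff)
  have W: "open W" "(x0, y0, z0) \<in> W"
    unfolding W_def by (rule open_slice) (use \<rho> in \<open>simp add: p0_def Pair_in_cube_iff\<close>)
  have I: "open I" "is_interval I" "l0 \<in> I"
    using \<rho> by (auto simp: I_def is_interval_1)
  have sub: "{(x, y, z, l) | x y z l. (x, y, z) \<in> W \<and> l \<in> I} \<subseteq> \<Omega>"
    using WI in_\<Omega> by blast
  define G where "G k = (\<lambda>(x, y, z). (d4 ^^ k) g (x, y, z, l0))" for k
  define E where "E k = (\<lambda>(x, y, z). (d4 ^^ k) h (x, y, z, l0))" for k
  have smooth: "smooth_on W (G k)" "smooth_on W (E k)" for k
    unfolding W_def G_def E_def
    by (rule smooth_on_slice[OF local_power_series_funpow_d4[OF g]]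
        smooth_on_slice[OF local_power_series_funpow_d4[OF h]])+
  have normal_form: "\<forall>x y z l. (x, y, z) \<in> W \<longrightarrow> l \<in> I \<longrightarrow>
      2 * G 1 (x, y, z) - G 2 (x, y, z) * (l - l0) \<noteq> 0
      \<and> g (x, y, z, l) * (2 * G 1 (x, y, z) - G 2 (x, y, z) * (l - l0))
        = 2 * G 0 (x, y, z) * G 1 (x, y, z) + (2 * (G 1 (x, y, z))\<^sup>2 - G 0 (x, y, z) * G 2 (x, y, z)) * (l - l0)
      \<and> h (x, y, z, l) * (2 * G 1 (x, y, z) - G 2 (x, y, z) * (l - l0))
        = 2 * E 0 (x, y, z) * G 1 (x, y, z)
          + (2 * E 1 (x, y, z) * G 1 (x, y, z) - E 0 (x, y, z) * G 2 (x, y, z)) * (l - l0)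
          + (E 2 (x, y, z) * G 1 (x, y, z) - E 1 (x, y, z) * G 2 (x, y, z)) * (l - l0)\<^sup>2"
    (is "\<forall>x y z l. _ \<longrightarrow> _ \<longrightarrow> ?normal_form x y z l")
  proof (intro allI impI)
    fix x y z l assume "(x, y, z) \<in> W" "l \<in> I"
    then show "?normal_form x y z l"
      using mobius_normal_form_on_slice[OF g h I(2,3), of x y z l] WI in_\<Omega> assms(5,7,8)
      by (auto simp: G_def E_def)
  qed
  show ?thesis
    using smooth_linear_fractional_coefficients[OF smooth I(3) normal_form] W I sub
    by (elim exE conjE) (intro exI conjI; assumption)
qed

end
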